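(* (a) There exists an identity-labeled full-graph Subgraph MPNN (i.e. a choice of $T$, $M_t$, $U_t$) such that for every graph $G=(V,E)$ and all $i,j\in V$, $h^{(T)}_{i,j}$ equals the number of $2$-paths from $i$ to $j$. (b) There exists an identity-labeled full-graph Subgraph MPNN such that for every graph $G$ and all $i,j\in V$, $h^{(T)}_{i,j}$ equals the number of $3$-paths from $i$ to $j$.
   Context: Graphs are finite, simple, undirected, $G=(V,E)$; $N(v)$ is the neighbour set of $v$. For $L\ge1$, an $L$-path from $i$ to $j$ is a sequence of nodes $i=v_1,v_2,\dots,v_{L+1}=j$, pairwise distinct, with $(v_s,v_{s+1})\in E$ for all $s$ (so there are none when $i=j$). Identity-labeled full-graph Subgraph MPNN: specified by $T$ and arbitrary functions $M_t$ (values in some $\mathbb R^{d_t}$), $U_t$. For each root $i\in V$ and each $j\in V$: $h^{(0)}_{i,j}=\mathbb 1_{i=j}$ (concatenated with the node attribute $x_j$ if attributes are present), and $h^{(t+1)}_{i,j}=U_t\big(h^{(t)}_{i,j},\sum_{k\in N(j)}M_t(h^{(t)}_{i,j},h^{(t)}_{i,k},e_{j,k})\big)$. *)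

theory Defs
  imports Complex_Main
begin

text \<open>Finite simple undirected graphs with vertices drawn from nat
  (every finite graph is isomorphic to one of these). V is the vertex set,
  Adj the (symmetric, irreflexive) adjacency relation.\<close>
definition simple_graph :: "nat set \<Rightarrow> (nat \<Rightarrow> nat \<Rightarrow> bool) \<Rightarrow> bool" where
  "simple_graph V Adj \<longleftrightarrow> finite V \<and>
     (\<forall>u v. Adj u v \<longrightarrow> u \<in> V \<and> v \<in> V) \<and>
     (\<forall>u v. Adj u v \<longrightarrow> Adj v u) \<and>
     (\<forall>v. \<not> Adj v v)"

definition nbrs :: "nat set \<Rightarrow> (nat \<Rightarrow> nat \<Rightarrow> bool) \<Rightarrow> nat \<Rightarrow> nat set" where
  "nbrs V Adj v = {k \<in> V. Adj v k}"

text \<open>Number of L-paths from i to j: sequences v_1..v_{L+1} (list indices 0..L),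
  pairwise distinct, consecutive vertices adjacent, v_1 = i, v_{L+1} = j.\<close>
definition num_paths :: "nat set \<Rightarrow> (nat \<Rightarrow> nat \<Rightarrow> bool) \<Rightarrow> nat \<Rightarrow> nat \<Rightarrow> nat \<Rightarrow> nat" where
  "num_paths V Adj L i j = card {p. length p = Suc L \<and> distinct p \<and> set p \<subseteq> V \<and>
      p ! 0 = i \<and> p ! L = j \<and> (\<forall>s<L. Adj (p ! s) (p ! Suc s))}"

definition msg_wf :: "(nat \<Rightarrow> nat) \<Rightarrow> (nat \<Rightarrow> real list \<Rightarrow> real list \<Rightarrow> real list) \<Rightarrow> bool" where
  "msg_wf d M \<longleftrightarrow> (\<forall>t x y. length (M t x y) = d t)"

text \<open>Identity-labeled full-graph Subgraph MPNN (no node/edge attributes):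
  h^(0)_{i,j} = 1_{i=j} (a vector in R^1),
  h^(t+1)_{i,j} = U_t (h^(t)_{i,j}, sum_{k in N(j)} M_t(h^(t)_{i,j}, h^(t)_{i,k})),
  the sum being the componentwise vector sum in R^(d t).\<close>
fun mpnn_h :: "(nat \<Rightarrow> nat) \<Rightarrow> (nat \<Rightarrow> real list \<Rightarrow> real list \<Rightarrow> real list)
     \<Rightarrow> (nat \<Rightarrow> real list \<Rightarrow> real list \<Rightarrow> real list)
     \<Rightarrow> nat set \<Rightarrow> (nat \<Rightarrow> nat \<Rightarrow> bool) \<Rightarrow> nat \<Rightarrow> nat \<Rightarrow> nat \<Rightarrow> real list" where
  "mpnn_h d M U V Adj 0 i j = [if i = j then 1 else 0]"
| "mpnn_h d M U V Adj (Suc t) i j =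
     U t (mpnn_h d M U V Adj t i j)
       (map (\<lambda>c. \<Sum>k\<in>nbrs V Adj j. M t (mpnn_h d M U V Adj t i j) (mpnn_h d M U V Adj t i k) ! c)
            [0..<d t])"

end

theory Submission
  imports Defs
begin

text \<open>Write A for the adjacency matrix. A 2-path from i to j is a 2-walk with i \<noteq> j, so there
  are [i \<noteq> j] A^2(i,j) of them. A 3-walk i a b j with i \<noteq> j fails to be a path exactly when
  a = j or b = i; inclusion-exclusion over the walks i j b j and i a i j, which share only
  i j i j, leaves [i \<noteq> j] (A^3(i,j) - (deg i + deg j - 1) A(i,j)) 3-paths.
  In the network rooted at i the initial label is the i-th unit vector, and summing a
  coordinate over the neighbours of j multiplies it by A. So one layer gives every node j the
  values A(i,j) and deg j, each further layer contributes one more factor A (and deg i A(i,j)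
  comes from deg k at the root k = i), and the last update assembles the count, using the root
  label to output 0 at j = i.\<close>

lemma sum_sum_Diff_singletons:
  fixes f :: "'a \<Rightarrow> 'a \<Rightarrow> 'b::ab_group_add"
  assumes "finite V" "i \<in> V" "j \<in> V"
  shows "(\<Sum>a\<in>V - {j}. \<Sum>b\<in>V - {i}. f a b)
       = (\<Sum>a\<in>V. \<Sum>b\<in>V. f a b) - (\<Sum>b\<in>V. f j b) - (\<Sum>a\<in>V. f a i) + f j i"
  using assms by (simp add: sum_diff1 sum_subtractf)

lemma card_pairs_eq_sum_of_bool:
  assumes "finite A" "finite B"
  shows "of_nat (card {(a, b) \<in> A \<times> B. P a b})
       = (\<Sum>a\<in>A. \<Sum>b\<in>B. of_bool (P a b) :: 'c::semiring_1)"
proof -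
  have "{(a, b) \<in> A \<times> B. P a b} = (SIGMA a:A. {b \<in> B. P a b})"
    by auto
  then show ?thesis
    using assms by (simp add: card_SigmaI Collect_conj_eq)
qed

lemma sum_delta_mult:
  fixes f :: "'a \<Rightarrow> 'b::semiring_1"
  assumes "finite A" "a \<in> A"
  shows "(\<Sum>k\<in>A. of_bool (a = k) * f k) = f a"
  using assms by (simp add: of_bool_def if_distrib[of "\<lambda>x. x * _"] cong: if_cong)

lemma mpnn_h_0: "mpnn_h d M U V Adj 0 i j = [of_bool (i = j)]"
  by simp

lemma num_paths_self:
  assumes "L > 0"
  shows "num_paths V Adj L i i = 0"
proof -
  have "p ! 0 \<noteq> p ! L" if "length p = Suc L" "distinct p" for p :: "nat list"
    using that assms by (simp add: nth_eq_iff_index_eq)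
  then show ?thesis
    unfolding num_paths_def card_eq_0_iff by (intro disjI1) auto
qed

locale undirected_graph =
  fixes V :: "nat set" and Adj :: "nat \<Rightarrow> nat \<Rightarrow> bool"
  assumes simple_graph: "simple_graph V Adj"
begin

lemma finite_V: "finite V"
  and Adj_in_V: "Adj u v \<Longrightarrow> u \<in> V \<and> v \<in> V"
  and Adj_commute: "Adj u v \<longleftrightarrow> Adj v u"
  and Adj_irrefl: "\<not> Adj v v"
  using simple_graph unfolding simple_graph_def by blast+

lemma two_paths_eq_image:
  assumes "i \<noteq> j"
  shows "{p. length p = Suc 2 \<and> distinct p \<and> set p \<subseteq> V \<and> p ! 0 = i \<and> p ! 2 = j \<and>
            (\<forall>s<2. Adj (p ! s) (p ! Suc s))}
       = (\<lambda>k. [i, k, j]) ` {k \<in> V. Adj i k \<and> Adj k j}" (is "?paths = ?image")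
proof (intro equalityI subsetI)
  fix p assume p: "p \<in> ?paths"
  then obtain a k b where "p = [a, k, b]"
    by (auto simp: numeral_eq_Suc length_Suc_conv)
  with p show "p \<in> ?image"
    by (auto simp: numeral_eq_Suc less_Suc_eq)
next
  fix p assume "p \<in> ?image"
  with assms Adj_in_V Adj_irrefl show "p \<in> ?paths"
    by (auto simp: numeral_eq_Suc less_Suc_eq)
qed

lemma three_paths_eq_image:
  assumes "i \<noteq> j"
  shows "{p. length p = Suc 3 \<and> distinct p \<and> set p \<subseteq> V \<and> p ! 0 = i \<and> p ! 3 = j \<and>
            (\<forall>s<3. Adj (p ! s) (p ! Suc s))}
       = (\<lambda>(a, b). [i, a, b, j]) `
           {(a, b) \<in> (V - {j}) \<times> (V - {i}). Adj i a \<and> Adj a b \<and> Adj b j}"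
    (is "?paths = ?image")
proof (intro equalityI subsetI)
  fix p assume p: "p \<in> ?paths"
  then obtain u a b v where "p = [u, a, b, v]"
    by (auto simp: numeral_eq_Suc length_Suc_conv)
  with p show "p \<in> ?image"
    by (auto simp: numeral_eq_Suc less_Suc_eq)
next
  fix p assume "p \<in> ?image"
  with assms Adj_in_V Adj_irrefl show "p \<in> ?paths"
    by (auto simp: numeral_eq_Suc less_Suc_eq)
qed

definition adj :: "nat \<Rightarrow> nat \<Rightarrow> real" where
  "adj u v = of_bool (Adj u v)"

definition deg :: "nat \<Rightarrow> real" where
  "deg v = (\<Sum>k\<in>V. adj k v)"

definition walks2 :: "nat \<Rightarrow> nat \<Rightarrow> real" where
  "walks2 i j = (\<Sum>k\<in>V. adj i k * adj k j)"

definition walks3 :: "nat \<Rightarrow> nat \<Rightarrow> real" where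
  "walks3 i j = (\<Sum>k\<in>V. walks2 i k * adj k j)"

lemma adj_sym: "adj u v = adj v u"
  by (simp add: adj_def Adj_commute)

lemma adj_mult_self: "adj u v * adj u v = adj u v"
  by (simp add: adj_def)

lemma adj_mult_adj_sym: "adj u v * adj v u = adj u v"
  by (simp add: adj_def Adj_commute)

lemma num_paths_2_eq_walks2:
  assumes "i \<noteq> j"
  shows "real (num_paths V Adj 2 i j) = walks2 i j"
proof -
  have "num_paths V Adj 2 i j = card {k \<in> V. Adj i k \<and> Adj k j}"
    unfolding num_paths_def two_paths_eq_image[OF assms] by (simp add: card_image inj_on_def)
  then show ?thesis
    using finite_V by (simp add: walks2_def adj_def of_bool_conj[symmetric] Collect_conj_eq)
qed

lemma num_paths_3_eq_sum:
  assumes "i \<noteq> j"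
  shows "real (num_paths V Adj 3 i j)
       = (\<Sum>a\<in>V - {j}. \<Sum>b\<in>V - {i}. adj i a * adj a b * adj b j)"
proof -
  have "num_paths V Adj 3 i j
      = card {(a, b) \<in> (V - {j}) \<times> (V - {i}). Adj i a \<and> Adj a b \<and> Adj b j}"
    unfolding num_paths_def three_paths_eq_image[OF assms]
    by (rule card_image) (auto simp: inj_on_def)
  also have "real \<dots>
      = (\<Sum>a\<in>V - {j}. \<Sum>b\<in>V - {i}. of_bool (Adj i a \<and> Adj a b \<and> Adj b j))"
    using finite_V by (intro card_pairs_eq_sum_of_bool) simp_all
  finally show ?thesis
    by (simp add: adj_def of_bool_conj mult.assoc)
qed

lemma num_paths_3_eq:
  assumes "i \<in> V" "j \<in> V" "i \<noteq> j"
  shows "real (num_paths V Adj 3 i j) = walks3 i j - (deg i + deg j - 1) * adj i j"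
proof -
  define f where "f a b = adj i a * adj a b * adj b j" for a b
  have "(\<Sum>a\<in>V. \<Sum>b\<in>V. f a b) = walks3 i j"
    unfolding f_def walks3_def walks2_def sum_distrib_right by (rule sum.swap)
  moreover have "(\<Sum>b\<in>V. f j b) = adj i j * deg j"
    by (simp add: f_def deg_def sum_distrib_left mult.assoc adj_mult_self adj_sym)
  moreover have "(\<Sum>a\<in>V. f a i) = deg i * adj i j"
    unfolding f_def deg_def sum_distrib_right
    by (rule sum.cong) (simp_all add: mult.commute adj_mult_adj_sym)
  moreover have "f j i = adj i j"
    by (simp add: f_def adj_mult_adj_sym adj_mult_self)
  ultimately show ?thesis
    using num_paths_3_eq_sum[OF assms(3)] sum_sum_Diff_singletons[OF finite_V assms(1,2), of f]
    by (simp add: f_def algebra_simps)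
qed

lemma sum_nbrs: "(\<Sum>k\<in>nbrs V Adj j. f k) = (\<Sum>k\<in>V. f k * adj k j)"
  using finite_V by (simp add: nbrs_def adj_def Adj_commute Collect_conj_eq)

lemma mpnn_h_Suc:
  "mpnn_h d M U V Adj (Suc t) i j =
     U t (mpnn_h d M U V Adj t i j)
       (map (\<lambda>c. \<Sum>k\<in>V.
                    M t (mpnn_h d M U V Adj t i j) (mpnn_h d M U V Adj t i k) ! c * adj k j)
            [0..<d t])"
  by (simp only: mpnn_h.simps sum_nbrs)

lemma mpnn_h_numeral:
  "mpnn_h d M U V Adj (numeral n) i j =
     U (pred_numeral n) (mpnn_h d M U V Adj (pred_numeral n) i j)
       (map (\<lambda>c. \<Sum>k\<in>V.
                    M (pred_numeral n) (mpnn_h d M U V Adj (pred_numeral n) i j)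
                      (mpnn_h d M U V Adj (pred_numeral n) i k) ! c * adj k j)
            [0..<d (pred_numeral n)])"
  by (simp only: numeral_eq_Suc mpnn_h_Suc)

end

definition two_path_msg :: "nat \<Rightarrow> real list \<Rightarrow> real list \<Rightarrow> real list" where
  "two_path_msg t x y = [y ! t]"

definition two_path_upd :: "nat \<Rightarrow> real list \<Rightarrow> real list \<Rightarrow> real list" where
  "two_path_upd t x s = (if t = 0 then [x ! 0, s ! 0] else [if x ! 0 = 1 then 0 else s ! 0])"

definition three_path_msg :: "nat \<Rightarrow> real list \<Rightarrow> real list \<Rightarrow> real list" where
  "three_path_msg t x y =
     (if t = 0 then [y ! 0, 1] else if t = 1 then [y ! 1, y ! 0 * y ! 2] else [y ! 3, 0])"

definition three_path_upd :: "nat \<Rightarrow> real list \<Rightarrow> real list \<Rightarrow> real list" where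
  "three_path_upd t x s =
     (if t = 0 then [x ! 0, s ! 0, s ! 1]
      else if t = 1 then x @ s
      else [if x ! 0 = 1 then 0 else s ! 0 - x ! 4 - x ! 1 * (x ! 2 - 1)])"

context undirected_graph
begin

lemma two_path_layer1:
  assumes "i \<in> V"
  shows "mpnn_h (\<lambda>_. 1) two_path_msg two_path_upd V Adj 1 i j = [of_bool (i = j), adj i j]"
  using assms
  by (simp del: mpnn_h.simps add: mpnn_h_0 mpnn_h_Suc
      two_path_msg_def two_path_upd_def sum_delta_mult finite_V)

lemma two_path_layer2:
  assumes "i \<in> V"
  shows "mpnn_h (\<lambda>_. 1) two_path_msg two_path_upd V Adj 2 i j
       = [real (num_paths V Adj 2 i j)]"
proof -
  have "mpnn_h (\<lambda>_. 1) two_path_msg two_path_upd V Adj 2 i j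
      = [of_bool (i \<noteq> j) * walks2 i j]"
    using assms
    by (subst mpnn_h_numeral)
      (simp del: mpnn_h.simps add: two_path_layer1[simplified]
        two_path_msg_def two_path_upd_def sum_delta_mult finite_V walks2_def)
  then show ?thesis
    by (cases "i = j") (simp_all add: num_paths_self num_paths_2_eq_walks2)
qed

lemma three_path_layer1:
  assumes "i \<in> V"
  shows "mpnn_h (\<lambda>_. 2) three_path_msg three_path_upd V Adj 1 i j
       = [of_bool (i = j), adj i j, deg j]"
  using assms
  by (simp del: mpnn_h.simps add: mpnn_h_0 mpnn_h_Suc
      three_path_msg_def three_path_upd_def sum_delta_mult finite_V deg_def)

lemma three_path_layer2:
  assumes "i \<in> V"
  shows "mpnn_h (\<lambda>_. 2) three_path_msg three_path_upd V Adj 2 i j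
       = [of_bool (i = j), adj i j, deg j, walks2 i j, deg i * adj i j]"
  using assms
  by (subst mpnn_h_numeral)
    (simp del: mpnn_h.simps add: three_path_layer1[simplified] upt_conv_Cons
      three_path_msg_def three_path_upd_def sum_delta_mult finite_V walks2_def mult.assoc)

lemma three_path_layer3:
  assumes "i \<in> V" "j \<in> V"
  shows "mpnn_h (\<lambda>_. 2) three_path_msg three_path_upd V Adj 3 i j
       = [real (num_paths V Adj 3 i j)]"
proof -
  have "mpnn_h (\<lambda>_. 2) three_path_msg three_path_upd V Adj 3 i j
      = [if i = j then 0 else walks3 i j - deg i * adj i j - adj i j * (deg j - 1)]"
    using assms
    by (subst mpnn_h_numeral)
      (simp del: mpnn_h.simps add: three_path_layer2 upt_conv_Cons
        three_path_msg_def three_path_upd_def walks3_def)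
  then show ?thesis
    using assms by (cases "i = j") (simp_all add: num_paths_self num_paths_3_eq algebra_simps)
qed

end

definition subgraph_mpnn_computable ::
    "(nat set \<Rightarrow> (nat \<Rightarrow> nat \<Rightarrow> bool) \<Rightarrow> nat \<Rightarrow> nat \<Rightarrow> real) \<Rightarrow> bool" where
  "subgraph_mpnn_computable f \<longleftrightarrow>
     (\<exists>T d M U. msg_wf d M \<and>
        (\<forall>V Adj. simple_graph V Adj \<longrightarrow>
           (\<forall>i\<in>V. \<forall>j\<in>V. mpnn_h d M U V Adj T i j = [f V Adj i j])))"

lemma subgraph_mpnn_computableI:
  assumes "msg_wf d M"
    and "\<And>V Adj i j. undirected_graph V Adj \<Longrightarrow> i \<in> V \<Longrightarrow> j \<in> V \<Longrightarrow>
           mpnn_h d M U V Adj T i j = [f V Adj i j]"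
  shows "subgraph_mpnn_computable f"
  unfolding subgraph_mpnn_computable_def using assms undirected_graph.intro by blast

theorem two_paths_subgraph_mpnn_computable:
  "subgraph_mpnn_computable (\<lambda>V Adj i j. real (num_paths V Adj 2 i j))"
  by (rule subgraph_mpnn_computableI
        [where T = 2 and d = "\<lambda>_. 1" and M = two_path_msg and U = two_path_upd])
    (simp add: msg_wf_def two_path_msg_def, rule undirected_graph.two_path_layer2)

theorem three_paths_subgraph_mpnn_computable:
  "subgraph_mpnn_computable (\<lambda>V Adj i j. real (num_paths V Adj 3 i j))"
  by (rule subgraph_mpnn_computableI
        [where T = 3 and d = "\<lambda>_. 2" and M = three_path_msg and U = three_path_upd])
    (simp add: msg_wf_def three_path_msg_def, rule undirected_graph.three_path_layer3)

theorem lemma2: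
  shows "(\<exists>T d M U. msg_wf d M \<and>
           (\<forall>V Adj. simple_graph V Adj \<longrightarrow>
              (\<forall>i\<in>V. \<forall>j\<in>V. mpnn_h d M U V Adj T i j = [real (num_paths V Adj 2 i j)])))
       \<and> (\<exists>T d M U. msg_wf d M \<and>
           (\<forall>V Adj. simple_graph V Adj \<longrightarrow>
              (\<forall>i\<in>V. \<forall>j\<in>V. mpnn_h d M U V Adj T i j = [real (num_paths V Adj 3 i j)])))"
  using two_paths_subgraph_mpnn_computable three_paths_subgraph_mpnn_computable
  unfolding subgraph_mpnn_computable_def by blast

end
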